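(* Let $k\ge 0$ be an integer and let $G$ be a $(k+1)$-edge-connected graph with $m$ edges. Then \[f_2(M(G))\leq m-\frac{3(k+1)}{2}.\]
   Context: $M(G)$ is the cycle matroid of $G=(V,E)$: the matroid on $E$ with rank function $rk(A)=|V|-k(A)$, where $k(A)$ is the number of components of the spanning subgraph $(V,A)$; let $r=rk(E)$. A flat of $M(G)$ is a set $F\subseteq E$ with $F=\{e\in E: rk(F\cup\{e\})=rk(F)\}$, and $f_2(M(G))=\max\{|F|: F\text{ a flat of } M(G),\ rk(F)=r-2\}$. *)

theory Defs
  imports Complex_Main
begin

text \<open>A finite multigraph (loops and parallel edges allowed) is given by a vertex set V,
an edge set E and an incidence map ends: each edge has one (loop) or two end vertices.\<close>

definition graph :: "'v set \<Rightarrow> 'e set \<Rightarrow> ('e \<Rightarrow> 'v set) \<Rightarrow> bool" where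
  "graph V E ends \<longleftrightarrow> finite V \<and> finite E \<and>
     (\<forall>e\<in>E. ends e \<subseteq> V \<and> 1 \<le> card (ends e) \<and> card (ends e) \<le> 2)"

definition adj :: "('e \<Rightarrow> 'v set) \<Rightarrow> 'e set \<Rightarrow> 'v \<Rightarrow> 'v \<Rightarrow> bool" where
  "adj ends A u v \<longleftrightarrow> (\<exists>e\<in>A. ends e = {u, v})"

definition num_comp :: "'v set \<Rightarrow> ('e \<Rightarrow> 'v set) \<Rightarrow> 'e set \<Rightarrow> nat" where
  "num_comp V ends A = card (V // {(u, v). u \<in> V \<and> v \<in> V \<and> (adj ends A)\<^sup>*\<^sup>* u v})"

text \<open>Rank function of the cycle matroid M(G): rk(A) = |V| - k(A).\<close>
definition cyc_rank :: "'v set \<Rightarrow> ('e \<Rightarrow> 'v set) \<Rightarrow> 'e set \<Rightarrow> int" where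
  "cyc_rank V ends A = int (card V) - int (num_comp V ends A)"

definition is_flat :: "'v set \<Rightarrow> 'e set \<Rightarrow> ('e \<Rightarrow> 'v set) \<Rightarrow> 'e set \<Rightarrow> bool" where
  "is_flat V E ends F \<longleftrightarrow>
     F = {e \<in> E. cyc_rank V ends (F \<union> {e}) = cyc_rank V ends F}"

definition edge_connected :: "'v set \<Rightarrow> 'e set \<Rightarrow> ('e \<Rightarrow> 'v set) \<Rightarrow> nat \<Rightarrow> bool" where
  "edge_connected V E ends l \<longleftrightarrow>
     num_comp V ends E = 1 \<and>
     (\<forall>S \<subseteq> E. card S < l \<longrightarrow> num_comp V ends (E - S) = 1)"

end

theory Submission
  imports Defs
begin

text \<open>Since G is connected, a flat F of rank r - 2 leaves exactly three components X1, X2, X3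
of (V, F). An edge outside F cannot have both ends in one component, for then adding it would not
raise the rank and it would belong to the flat. So every edge of E - F lies in exactly two of the
cuts \<delta>(Xi), while by (k+1)-edge-connectivity each cut has at least k + 1 edges; double
counting gives 2 |E - F| \<ge> 3 (k + 1).\<close>

definition comp_rel :: "'v set \<Rightarrow> ('e \<Rightarrow> 'v set) \<Rightarrow> 'e set \<Rightarrow> ('v \<times> 'v) set" where
  "comp_rel V ends A = {(u, v). u \<in> V \<and> v \<in> V \<and> (adj ends A)\<^sup>*\<^sup>* u v}"

definition cut_edges :: "('e \<Rightarrow> 'v set) \<Rightarrow> 'e set \<Rightarrow> 'v set \<Rightarrow> 'e set" where
  "cut_edges ends A X = {e \<in> A. \<exists>p\<in>ends e. \<exists>q\<in>ends e. p \<in> X \<and> q \<notin> X}"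

lemma num_comp_eq_card_quotient: "num_comp V ends A = card (V // comp_rel V ends A)"
  unfolding num_comp_def comp_rel_def by simp

lemma symp_adj: "symp (adj ends A)"
  by (rule sympI) (auto simp: adj_def insert_commute)

lemma equiv_comp_rel: "equiv V (comp_rel V ends A)"
  using sympD[OF symp_rtranclp[OF symp_adj]]
  unfolding equiv_def refl_on_def sym_def trans_def comp_rel_def
  by (auto intro: rtranclp_trans)

lemma num_comp_eq_1_imp_connected:
  assumes "num_comp V ends A = 1" "x \<in> V" "y \<in> V"
  shows "(adj ends A)\<^sup>*\<^sup>* x y"
proof -
  let ?R = "comp_rel V ends A"
  obtain Z where Z: "V // ?R = {Z}"
    using assms(1) unfolding num_comp_eq_card_quotient by (rule card_1_singletonE)
  have "?R``{x} \<in> {Z}" "?R``{y} \<in> {Z}"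
    unfolding Z[symmetric] using assms(2,3) by (simp_all add: quotientI)
  then have "?R``{x} = ?R``{y}" by simp
  then have "y \<in> ?R``{x}"
    using equiv_class_self[OF equiv_comp_rel assms(3)] by simp
  then show ?thesis unfolding comp_rel_def by simp
qed

lemma walk_avoiding_cut_stays_inside:
  assumes "(adj ends (A - cut_edges ends A X))\<^sup>*\<^sup>* x z" "x \<in> X"
  shows "z \<in> X"
  using assms
proof (induction rule: rtranclp_induct)
  case (step y z)
  then obtain e where "e \<in> A" "e \<notin> cut_edges ends A X" "ends e = {y, z}"
    unfolding adj_def by auto
  with step show ?case unfolding cut_edges_def by blast
qed

lemma edge_connected_le_card_cut_edges:
  assumes "edge_connected V E ends l" "x \<in> X" "x \<in> V" "y \<in> V" "y \<notin> X"
  shows "l \<le> card (cut_edges ends E X)"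
proof (rule ccontr)
  assume "\<not> l \<le> card (cut_edges ends E X)"
  moreover have "cut_edges ends E X \<subseteq> E" unfolding cut_edges_def by blast
  ultimately have "num_comp V ends (E - cut_edges ends E X) = 1"
    using assms(1) unfolding edge_connected_def by simp
  then have "(adj ends (E - cut_edges ends E X))\<^sup>*\<^sup>* x y"
    using assms(3,4) by (rule num_comp_eq_1_imp_connected)
  then show False
    using walk_avoiding_cut_stays_inside assms(2,5) by metis
qed

lemma edge_connected_le_card_cut_edges_class:
  assumes "edge_connected V E ends l" "equiv V R" "X \<in> V // R" "2 \<le> card (V // R)"
  shows "l \<le> card (cut_edges ends E X)"
proof -
  have "\<exists>Y \<in> V // R. Y \<noteq> X"
  proof (rule ccontr)
    assume "\<not> ?thesis"
    then have "card (V // R) \<le> card {X}" by (intro card_mono) auto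
    then show False using assms(4) by simp
  qed
  then obtain Y where Y: "Y \<in> V // R" "Y \<noteq> X" by blast
  have sub: "X \<subseteq> V" "Y \<subseteq> V"
    using in_quotient_imp_subset assms(2,3) Y(1) by blast+
  obtain x y where x: "x \<in> X" and y: "y \<in> Y"
    using in_quotient_imp_non_empty assms(2,3) Y(1) by blast
  have "y \<notin> X"
    using quotient_disj[OF assms(2,3) Y(1)] Y(2) y by blast
  then show ?thesis
    using edge_connected_le_card_cut_edges[OF assms(1) x] x y sub by blast
qed

lemma card_classes_separating_pair:
  assumes "equiv V R" "a \<in> V" "b \<in> V" "(a, b) \<notin> R"
  shows "card {X \<in> V // R. \<exists>p\<in>{a, b}. \<exists>q\<in>{a, b}. p \<in> X \<and> q \<notin> X} = 2"
proof -
  have ba: "(b, a) \<notin> R"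
    using assms(1,4) unfolding equiv_def sym_def by blast
  have "{X \<in> V // R. \<exists>p\<in>{a, b}. \<exists>q\<in>{a, b}. p \<in> X \<and> q \<notin> X} = {R``{a}, R``{b}}"
  proof (intro set_eqI iffI)
    fix X assume "X \<in> {X \<in> V // R. \<exists>p\<in>{a, b}. \<exists>q\<in>{a, b}. p \<in> X \<and> q \<notin> X}"
    then have X: "X \<in> V // R" and "\<exists>p\<in>{a, b}. p \<in> X" by auto
    then obtain p where "p \<in> {a, b}" "p \<in> X" by blast
    moreover obtain x where "X = R``{x}"
      using X by (blast elim: quotientE)
    ultimately show "X \<in> {R``{a}, R``{b}}"
      using equiv_class_eq[OF assms(1)] by blast
  next
    fix X assume "X \<in> {R``{a}, R``{b}}"
    then show "X \<in> {X \<in> V // R. \<exists>p\<in>{a, b}. \<exists>q\<in>{a, b}. p \<in> X \<and> q \<notin> X}"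
      using quotientI assms equiv_class_self[OF assms(1)] ba by fastforce
  qed
  moreover have "R``{a} \<noteq> R``{b}"
    using eq_equiv_class_iff[OF assms(1-3)] assms(4) by blast
  ultimately show ?thesis by simp
qed

lemma graph_ends_eq_doubleton:
  assumes "graph V E ends" "e \<in> E" "a \<in> ends e" "b \<in> ends e" "a \<noteq> b"
  shows "ends e = {a, b}"
proof -
  have "finite (ends e)" "card (ends e) \<le> 2"
    using assms(1,2) finite_subset unfolding graph_def by auto
  then show ?thesis
    using card_seteq[of "ends e" "{a, b}"] assms(3-5) by simp
qed

lemma rtranclp_adj_insert_edge:
  assumes "\<forall>a\<in>ends e. \<forall>b\<in>ends e. (adj ends A)\<^sup>*\<^sup>* a b"
  shows "(adj ends (insert e A))\<^sup>*\<^sup>* = (adj ends A)\<^sup>*\<^sup>*"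
proof (rule rtranclp_subset)
  show "adj ends A \<le> adj ends (insert e A)"
    unfolding adj_def by auto
  show "adj ends (insert e A) \<le> (adj ends A)\<^sup>*\<^sup>*"
    using assms unfolding adj_def by auto
qed

lemma is_flat_subset: "is_flat V E ends F \<Longrightarrow> F \<subseteq> E"
  unfolding is_flat_def by blast

lemma flat_edge_joins_classes:
  assumes "graph V E ends" "is_flat V E ends F" "e \<in> E" "e \<notin> F"
  obtains a b where "ends e = {a, b}" "a \<in> V" "b \<in> V" "(a, b) \<notin> comp_rel V ends F"
proof -
  have "\<not> (\<forall>a\<in>ends e. \<forall>b\<in>ends e. (adj ends F)\<^sup>*\<^sup>* a b)"
  proof
    assume "\<forall>a\<in>ends e. \<forall>b\<in>ends e. (adj ends F)\<^sup>*\<^sup>* a b"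
    then have "cyc_rank V ends (F \<union> {e}) = cyc_rank V ends F"
      by (simp add: cyc_rank_def num_comp_def rtranclp_adj_insert_edge)
    then have "e \<in> F"
      using assms(2,3) unfolding is_flat_def by blast
    then show False using assms(4) by blast
  qed
  then obtain a b where ab: "a \<in> ends e" "b \<in> ends e" "\<not> (adj ends F)\<^sup>*\<^sup>* a b"
    by blast
  then have "ends e = {a, b}"
    using graph_ends_eq_doubleton[OF assms(1,3)] by fastforce
  moreover have "ends e \<subseteq> V"
    using assms(1,3) unfolding graph_def by blast
  ultimately show ?thesis
    using that ab unfolding comp_rel_def by blast
qed

lemma cut_edges_class_empty:
  assumes "graph V E ends" "F \<subseteq> E" "X \<in> V // comp_rel V ends F"
  shows "cut_edges ends F X = {}"
proof (rule ccontr)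
  assume "cut_edges ends F X \<noteq> {}"
  then obtain e p q where e: "e \<in> F" "p \<in> ends e" "q \<in> ends e" "p \<in> X" "q \<notin> X"
    unfolding cut_edges_def by blast
  then have "ends e = {p, q}"
    using graph_ends_eq_doubleton[OF assms(1)] assms(2) by blast
  moreover have "ends e \<subseteq> V"
    using assms(1,2) e(1) unfolding graph_def by blast
  ultimately have "(p, q) \<in> comp_rel V ends F"
    using e(1) unfolding comp_rel_def adj_def by blast
  then show False
    using in_quotient_imp_closed[OF equiv_comp_rel assms(3) e(4)] e(5) by blast
qed

lemma sum_card_cut_edges_flat_classes:
  assumes "graph V E ends" "is_flat V E ends F"
  shows "(\<Sum>X \<in> V // comp_rel V ends F. card (cut_edges ends E X)) = 2 * card (E - F)"
proof -
  let ?crosses = "\<lambda>X e. \<exists>p\<in>ends e. \<exists>q\<in>ends e. p \<in> X \<and> q \<notin> X"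
  let ?Q = "V // comp_rel V ends F"
  have FE: "F \<subseteq> E" using assms(2) by (rule is_flat_subset)
  have fin: "finite V" "finite E" using assms(1) unfolding graph_def by auto
  have "cut_edges ends E X = {e \<in> E - F. ?crosses X e}" if "X \<in> ?Q" for X
    using cut_edges_class_empty[OF assms(1) FE that] unfolding cut_edges_def by blast
  then have "(\<Sum>X \<in> ?Q. card (cut_edges ends E X)) = (\<Sum>X \<in> ?Q. card {e \<in> E - F. ?crosses X e})"
    by simp
  also have "\<dots> = 2 * card (E - F)"
  proof (rule sum_multicount)
    show "finite ?Q"
      using fin(1) by (rule finite_quotient) (auto simp: comp_rel_def)
    show "finite (E - F)" using fin(2) by simp
    show "\<forall>e \<in> E - F. card {X \<in> ?Q. ?crosses X e} = 2"
    proof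
      fix e assume "e \<in> E - F"
      then obtain a b where "ends e = {a, b}" "a \<in> V" "b \<in> V" "(a, b) \<notin> comp_rel V ends F"
        using flat_edge_joins_classes[OF assms] by blast
      then show "card {X \<in> ?Q. ?crosses X e} = 2"
        using card_classes_separating_pair[OF equiv_comp_rel] by simp
    qed
  qed
  finally show ?thesis .
qed

theorem lemma3p6:
  fixes V :: "'v set" and E :: "'e set" and ends :: "'e \<Rightarrow> 'v set" and k :: nat
  assumes "graph V E ends"
    and "edge_connected V E ends (k + 1)"
  shows "\<forall>F. is_flat V E ends F \<and> cyc_rank V ends F = cyc_rank V ends E - 2 \<longrightarrow>
           real (card F) \<le> real (card E) - 3 * (real k + 1) / 2"
proof (intro allI impI, elim conjE)
  fix F assume flat: "is_flat V E ends F" and rank: "cyc_rank V ends F = cyc_rank V ends E - 2"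
  let ?Q = "V // comp_rel V ends F"
  have "card ?Q = 3"
    using rank assms(2)
    unfolding cyc_rank_def edge_connected_def num_comp_eq_card_quotient by simp
  then have "3 * (k + 1) \<le> (\<Sum>X \<in> ?Q. card (cut_edges ends E X))"
    using sum_bounded_below[of ?Q "k + 1" "\<lambda>X. card (cut_edges ends E X)"]
      edge_connected_le_card_cut_edges_class[OF assms(2) equiv_comp_rel, of _ ends F]
    by simp
  also have "\<dots> = 2 * card (E - F)"
    using assms(1) flat by (rule sum_card_cut_edges_flat_classes)
  also have "\<dots> = 2 * (card E - card F)"
    using is_flat_subset[OF flat] assms(1) unfolding graph_def
    by (simp add: card_Diff_subset finite_subset)
  finally have "3 * (k + 1) \<le> 2 * (card E - card F)" .
  moreover have "card F \<le> card E"
    using is_flat_subset[OF flat] assms(1) unfolding graph_def by (simp add: card_mono)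
  ultimately have "3 * (k + 1) + 2 * card F \<le> 2 * card E" by linarith
  then have "real (3 * (k + 1) + 2 * card F) \<le> real (2 * card E)"
    by (simp only: of_nat_le_iff)
  then show "real (card F) \<le> real (card E) - 3 * (real k + 1) / 2"
    by (simp add: field_simps)
qed

end
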